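(* Let $m\geqslant 2$ be an integer and let $\pi$ be an irreducible unitary cuspidal representation of $GL_m(\mathbb A_{\mathbb Q})$. For any prime $p$ such that $\pi_p$ is unramified, $$|\lambda_\pi(p^m)|+|\lambda_\pi(p^{m-1})|+\cdots+|\lambda_\pi(p)|\geqslant \frac1m.$$
   Context: To $\pi=\otimes\pi_p$ one attaches $L(s,\pi)=\prod_p\prod_{j=1}^m(1-\alpha_\pi(p,j)p^{-s})^{-1}$ for $\Re s>1$, where $\{\alpha_\pi(p,j)\}_{j=1}^m$ are the local (Satake) parameters of $\pi_p$. Writing $L(s,\pi)=\sum_{n\ge1}\lambda_\pi(n)n^{-s}$, one has $\lambda_\pi(n)=\prod_{p^\nu\| n}\sum_{\nu_1+\cdots+\nu_m=\nu}\alpha_\pi(p,1)^{\nu_1}\cdots\alpha_\pi(p,m)^{\nu_m}$. *)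

theory Defs
  imports "HOL-Analysis.Analysis" "HOL-Computational_Algebra.Primes"
begin

text \<open>Dirichlet coefficients of the standard L-function attached to a family of local
  (Satake) parameters: alpha p j is the j-th parameter (0 <= j < m) at the prime p, and
  lambda m alpha n = prod over p^nu || n of the complete homogeneous symmetric polynomial
  of degree nu in alpha p 0, ..., alpha p (m-1).\<close>

definition exps :: "nat \<Rightarrow> nat \<Rightarrow> (nat \<Rightarrow> nat) set" where
  "exps m \<nu> = {e. (\<forall>j. m \<le> j \<longrightarrow> e j = 0) \<and> (\<Sum>j<m. e j) = \<nu>}"

definition lambda_coeff :: "nat \<Rightarrow> (nat \<Rightarrow> nat \<Rightarrow> complex) \<Rightarrow> nat \<Rightarrow> complex" where
  "lambda_coeff m \<alpha> n =
     (\<Prod>p\<in>prime_factors n. \<Sum>e\<in>exps m (multiplicity p n). \<Prod>j<m. \<alpha> p j ^ e j)"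

end

theory Submission
  imports Defs "HOL-Computational_Algebra.Formal_Power_Series" "HOL-Library.FuncSet"
begin

text \<open>At an unramified prime the local factor is \<open>H(X) = \<Prod>\<^sub>j (1 - \<alpha>\<^sub>j X)\<inverse>\<close>, whose
  coefficients are the \<open>\<lambda>(p\<^sup>k)\<close>. Its inverse \<open>P(X) = \<Prod>\<^sub>j (1 - \<alpha>\<^sub>j X)\<close> has constant term 1
  and top coefficient \<open>\<plusminus>\<Prod>\<^sub>j \<alpha>\<^sub>j\<close> of modulus 1. Comparing coefficients in \<open>H P = 1\<close> shows
  that, as long as \<open>\<Sum>\<^sub>k\<^sub>=\<^sub>1\<^sup>m |\<lambda>(p\<^sup>k)| < 1\<close>, every coefficient \<open>P\<^sub>n\<close> with \<open>1 \<le> n \<le> m\<close> is bounded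
  by that sum, contradicting \<open>|P\<^sub>m| = 1\<close>. Hence the sum is even at least 1.\<close>

unbundle no vec_syntax
notation fps_nth (infixl \<open>$\<close> 75)

definition complete_homogeneous :: "nat \<Rightarrow> (nat \<Rightarrow> 'a::comm_semiring_1) \<Rightarrow> nat \<Rightarrow> 'a" where
  "complete_homogeneous m a k = (\<Sum>e\<in>exps m k. \<Prod>j<m. a j ^ e j)"

lemma exps_0: "exps m 0 = {\<lambda>_. 0}"
proof (intro set_eqI iffI)
  fix e assume "e \<in> exps m 0"
  hence "e j = 0" for j by (cases "j < m") (auto simp: exps_def)
  thus "e \<in> {\<lambda>_. 0}" by auto
qed (simp add: exps_def)

lemma finite_exps: "finite (exps m k)"
proof -
  have "restrict e {..<m} \<in> PiE {..<m} (\<lambda>_. {0..k})" if e: "e \<in> exps m k" for e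
  proof -
    have "e j \<le> k" if "j < m" for j
    proof -
      have "e j \<le> (\<Sum>i<m. e i)" using that by (intro member_le_sum) auto
      thus ?thesis using e by (simp add: exps_def)
    qed
    thus ?thesis by (simp add: restrict_PiE_iff)
  qed
  hence "(\<lambda>e. restrict e {..<m}) ` exps m k \<subseteq> PiE {..<m} (\<lambda>_. {0..k})" by blast
  hence "finite ((\<lambda>e. restrict e {..<m}) ` exps m k)"
    by (rule finite_subset) (intro finite_PiE; simp)
  moreover have "inj_on (\<lambda>e. restrict e {..<m}) (exps m k)"
  proof (rule inj_onI)
    fix x y assume "x \<in> exps m k" "y \<in> exps m k" "restrict x {..<m} = restrict y {..<m}"
    show "x = y"
    proof
      fix j show "x j = y j"
        using \<open>restrict x {..<m} = restrict y {..<m}\<close> \<open>x \<in> exps m k\<close> \<open>y \<in> exps m k\<close>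
        by (cases "j < m") (auto simp: exps_def dest: fun_cong[of _ _ j])
    qed
  qed
  ultimately show ?thesis by (rule finite_imageD)
qed

lemma lambda_coeff_prime_power:
  assumes "prime p"
  shows "lambda_coeff m \<alpha> (p ^ k) = complete_homogeneous m (\<alpha> p) k"
proof (cases "k = 0")
  case True
  thus ?thesis by (simp add: lambda_coeff_def complete_homogeneous_def exps_0)
next
  case False
  hence "prime_factors (p ^ k) = {p}"
    using assms by (simp add: prime_factorization_prime_power)
  moreover have "multiplicity p (p ^ k) = k" using assms by simp
  ultimately show ?thesis by (simp add: lambda_coeff_def complete_homogeneous_def)
qed

lemma fps_nth_prod_geometric:
  fixes a :: "nat \<Rightarrow> 'a::comm_semiring_1"
  shows "(\<Prod>j<m. Abs_fps (\<lambda>n. a j ^ n)) $ k = complete_homogeneous m a k"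
  unfolding complete_homogeneous_def
proof (induction m arbitrary: k)
  case 0
  have "exps 0 k = (if k = 0 then {\<lambda>_. 0} else {})" by (auto simp: exps_def)
  thus ?case by simp
next
  case (Suc m)
  have "(\<Prod>j<Suc m. Abs_fps (\<lambda>n. a j ^ n)) $ k
      = (\<Sum>i=0..k. \<Sum>e\<in>exps m i. (\<Prod>j<m. a j ^ e j) * a m ^ (k - i))"
    by (simp add: fps_mult_nth Suc.IH sum_distrib_right)
  also have "\<dots> = (\<Sum>(i,e)\<in>Sigma {0..k} (exps m). (\<Prod>j<m. a j ^ e j) * a m ^ (k - i))"
    by (rule sum.Sigma) (auto simp: finite_exps)
  also have "\<dots> = (\<Sum>e\<in>exps (Suc m) k. \<Prod>j<Suc m. a j ^ e j)"
  proof (rule sum.reindex_bij_witness[where i = "\<lambda>e. (k - e m, e(m := 0))"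
                                        and j = "\<lambda>(i,e). e(m := k - i)"])
    fix ie assume "ie \<in> Sigma {0..k} (exps m)"
    then obtain i e where ie: "ie = (i,e)" "i \<le> k" "e \<in> exps m i" by auto
    have "(\<Sum>j<m. (e(m := k - i)) j) = i" using ie(3) by (simp add: exps_def)
    with ie show "(\<lambda>e. (k - e m, e(m := 0))) ((\<lambda>(i,e). e(m := k - i)) ie) = ie"
      and "(\<lambda>(i,e). e(m := k - i)) ie \<in> exps (Suc m) k"
      by (auto simp: exps_def fun_eq_iff)
    have "(\<Prod>j<m. a j ^ (e(m := k - i)) j) = (\<Prod>j<m. a j ^ e j)"
      by (rule prod.cong) auto
    with ie show "(\<Prod>j<Suc m. a j ^ ((\<lambda>(i,e). e(m := k - i)) ie) j)
        = (case ie of (i,e) \<Rightarrow> (\<Prod>j<m. a j ^ e j) * a m ^ (k - i))"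
      by simp
  next
    fix e assume e: "e \<in> exps (Suc m) k"
    hence "(\<Sum>j<m. e j) + e m = k" by (simp add: exps_def)
    moreover have "(\<Sum>j<m. (e(m:=0)) j) = (\<Sum>j<m. e j)" by (rule sum.cong) auto
    ultimately show "(\<lambda>(i,e). e(m := k - i)) (k - e m, e(m := 0)) = e"
      and "(k - e m, e(m := 0)) \<in> Sigma {0..k} (exps m)"
      using e by (auto simp: exps_def fun_eq_iff)
  qed
  finally show ?case .
qed

lemma fps_geometric_times_linear:
  fixes c :: "'a::comm_ring_1"
  shows "Abs_fps (\<lambda>n. c ^ n) * (1 - fps_const c * fps_X) = 1"
proof (rule fps_ext)
  fix n
  have "Abs_fps (\<lambda>n. c ^ n) * (1 - fps_const c * fps_X) =
        Abs_fps (\<lambda>n. c ^ n) - fps_const c * (fps_X * Abs_fps (\<lambda>n. c ^ n))"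
    by (simp add: right_diff_distrib ac_simps)
  thus "(Abs_fps (\<lambda>n. c ^ n) * (1 - fps_const c * fps_X)) $ n = (1::'a fps) $ n"
    by (cases n) (simp_all add: fps_mult_left_const_nth)
qed

lemma fps_prod_linear_nth_Suc:
  fixes a :: "nat \<Rightarrow> 'a::comm_ring_1"
  shows "(\<Prod>j<Suc m. 1 - fps_const (a j) * fps_X) $ k
       = (\<Prod>j<m. 1 - fps_const (a j) * fps_X) $ k
         - a m * (if k = 0 then 0 else (\<Prod>j<m. 1 - fps_const (a j) * fps_X) $ (k - 1))"
proof -
  define P where "P = (\<Prod>j<m. 1 - fps_const (a j) * fps_X)"
  have "(\<Prod>j<Suc m. 1 - fps_const (a j) * fps_X) = P - fps_const (a m) * (fps_X * P)"
    unfolding P_def by (simp add: right_diff_distrib left_diff_distrib ac_simps)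
  thus ?thesis unfolding P_def[symmetric] by (simp add: fps_mult_left_const_nth)
qed

lemma fps_prod_linear_nth_above:
  fixes a :: "nat \<Rightarrow> 'a::comm_ring_1"
  shows "k > m \<Longrightarrow> (\<Prod>j<m. 1 - fps_const (a j) * fps_X) $ k = 0"
  by (induction m arbitrary: k) (auto simp: fps_prod_linear_nth_Suc simp del: prod.lessThan_Suc)

lemma fps_prod_linear_nth_0:
  fixes a :: "nat \<Rightarrow> 'a::comm_ring_1"
  shows "(\<Prod>j<m. 1 - fps_const (a j) * fps_X) $ 0 = 1"
  by (induction m) (simp_all add: fps_prod_linear_nth_Suc del: prod.lessThan_Suc)

lemma fps_prod_linear_nth_degree:
  fixes a :: "nat \<Rightarrow> 'a::comm_ring_1"
  shows "(\<Prod>j<m. 1 - fps_const (a j) * fps_X) $ m = (-1) ^ m * (\<Prod>j<m. a j)"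
proof (induction m)
  case (Suc m)
  have "(\<Prod>j<Suc m. 1 - fps_const (a j) * fps_X) $ Suc m
      = - a m * (\<Prod>j<m. 1 - fps_const (a j) * fps_X) $ m"
    using fps_prod_linear_nth_Suc[of a m "Suc m"] fps_prod_linear_nth_above[of m "Suc m" a]
    by (simp del: prod.lessThan_Suc)
  with Suc.IH show ?case by (simp add: mult_ac)
qed simp

lemma norm_inverse_coeff_le_sum_norm_coeffs:
  fixes f g :: "'a::real_normed_field fps"
  assumes fg: "f * g = 1" and g0: "g $ 0 = 1"
    and small: "(\<Sum>i=1..n. norm (f $ i)) \<le> 1"
  shows "1 \<le> k \<Longrightarrow> k \<le> n \<Longrightarrow> norm (g $ k) \<le> (\<Sum>i=1..n. norm (f $ i))"
proof (induction k rule: less_induct)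
  case (less k)
  have "f $ 0 = 1" using fg g0 by (metis fps_mult_nth_0 fps_one_nth mult.right_neutral)
  moreover have "(\<Sum>i=0..k. f $ i * g $ (k - i)) = 0"
    using fg less.prems by (metis fps_mult_nth fps_one_nth not_one_le_zero)
  moreover have "(\<Sum>i=0..k. f $ i * g $ (k - i)) = f $ 0 * g $ k + (\<Sum>i=1..k. f $ i * g $ (k - i))"
    using less.prems by (simp add: sum.atLeast_Suc_atMost)
  ultimately have recurrence: "g $ k = - (\<Sum>i=1..k. f $ i * g $ (k - i))"
    by (simp add: eq_neg_iff_add_eq_0 add.commute)
  have "norm (g $ k) \<le> (\<Sum>i=1..k. norm (f $ i * g $ (k - i)))"
    unfolding recurrence norm_minus_cancel by (rule norm_sum)
  also have "\<dots> \<le> (\<Sum>i=1..k. norm (f $ i))"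
  proof (rule sum_mono)
    fix i assume i: "i \<in> {1..k}"
    have "norm (g $ (k - i)) \<le> 1"
      using g0 less.IH[of "k - i"] i less.prems small by (cases "k - i = 0") auto
    thus "norm (f $ i * g $ (k - i)) \<le> norm (f $ i)"
      by (simp add: norm_mult mult_left_le)
  qed
  also have "\<dots> \<le> (\<Sum>i=1..n. norm (f $ i))"
    using less.prems by (intro sum_mono2) auto
  finally show ?case .
qed

lemma sum_norm_coeffs_ge_1_if_inverse_coeff_unimodular:
  fixes f g :: "'a::real_normed_field fps"
  assumes "f * g = 1" and "g $ 0 = 1" and "n \<ge> 1" and "norm (g $ n) = 1"
  shows "(\<Sum>i=1..n. norm (f $ i)) \<ge> 1"
  using norm_inverse_coeff_le_sum_norm_coeffs[OF assms(1,2), of n n] assms(3,4)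
  by (cases "(\<Sum>i=1..n. norm (f $ i)) \<le> 1") auto

theorem lemma4p12:
  fixes m p :: nat and \<alpha> :: "nat \<Rightarrow> nat \<Rightarrow> complex"
  assumes "m \<ge> 2" and "prime p"
    and "cmod (\<Prod>j<m. \<alpha> p j) = 1"
  shows "(\<Sum>k=1..m. cmod (lambda_coeff m \<alpha> (p ^ k))) \<ge> 1 / real m"
proof -
  define H where "H = (\<Prod>j<m. Abs_fps (\<lambda>n. \<alpha> p j ^ n))"
  define P where "P = (\<Prod>j<m. 1 - fps_const (\<alpha> p j) * fps_X)"
  have "lambda_coeff m \<alpha> (p ^ k) = H $ k" for k
    using assms(2) by (simp add: lambda_coeff_prime_power H_def fps_nth_prod_geometric)
  moreover have "H * P = 1"
    unfolding H_def P_def prod.distrib[symmetric] by (simp add: fps_geometric_times_linear)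
  moreover have "P $ 0 = 1" by (simp add: P_def fps_prod_linear_nth_0)
  moreover have "cmod (P $ m) = 1"
    using assms(3) by (simp add: P_def fps_prod_linear_nth_degree norm_mult norm_power)
  ultimately have "(\<Sum>k=1..m. cmod (lambda_coeff m \<alpha> (p ^ k))) \<ge> 1"
    using assms(1) sum_norm_coeffs_ge_1_if_inverse_coeff_unimodular[of H P m] by simp
  moreover have "1 / real m \<le> 1" using assms(1) by simp
  ultimately show ?thesis by linarith
qed

end
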